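(* Let $a,b,e\in\mathbb{R}$ with $b\ne0$, and let $\alpha_i(t)$ ($i=1,\dots,4$) be scalar continuous functions. (i) Suppose $b\alpha_1(t)+\alpha_3(t)$ is $2\pi/|b|$-periodic and odd, and $a(a+e)<0$. Then the solution $$x(t)=\sqrt{-a(a+e)}\sin\Big(bt+\int_0^t(b\alpha_1(s)+\alpha_3(s))ds\Big),\ y(t)=\sqrt{-a(a+e)}\cos\Big(bt+\int_0^t(b\alpha_1(s)+\alpha_3(s))ds\Big),\ z(t)=-a$$ of the system $$\begin{aligned}\dot x&=(ax+by+xz)(1+\alpha_1(t))+x(a+z)\alpha_2(t)+y\alpha_3(t),\\ \dot y&=(-bx+ay+yz)(1+\alpha_1(t))+y(a+z)\alpha_2(t)-x\alpha_3(t),\\ \dot z&=(ez-x^2-y^2-z^2)(1+\alpha_1(t)+\alpha_2(t))\end{aligned}$$ is $2\pi/|b|$-periodic (the period not necessarily minimal). (ii) Suppose $b\alpha_1(t)+\alpha_3(t)+a^4\alpha_4(t)$ is $2\pi/|b|$-periodic and odd. Then the solution $$x(t)=a\sin\Big(bt+\int_0^t(b\alpha_1(s)+\alpha_3(s)+a^4\alpha_4(s))ds\Big),\ y(t)=a\cos\Big(bt+\int_0^t(b\alpha_1(s)+\alpha_3(s)+a^4\alpha_4(s))ds\Big),\ z(t)=-a$$ of the system $$\begin{aligned}\dot x&=(ax+by+xz)(1+\alpha_1(t))+x(a+z)\alpha_2(t)+y\alpha_3(t)-y(x^2+y^2)(4az+x^2+y^2+2z^2)\alpha_4(t),\\ \dot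 y&=(-bx+ay+yz)(1+\alpha_1(t))+y(a+z)\alpha_2(t)-x\alpha_3(t)+x(x^2+y^2)(4az+x^2+y^2+2z^2)\alpha_4(t),\\ \dot z&=-(2az+x^2+y^2+z^2)(1+\alpha_1(t)+\alpha_2(t))\end{aligned}$$ is $2\pi/|b|$-periodic (the period not necessarily minimal). *)

theory Defs
  imports "HOL-Analysis.Analysis"
begin

definition oint0 :: "(real \<Rightarrow> real) \<Rightarrow> real \<Rightarrow> real" where
  "oint0 g t = (if 0 \<le> t then integral {0..t} g else - integral {t..0} g)"

definition periodic_with :: "real \<Rightarrow> (real \<Rightarrow> 'a) \<Rightarrow> bool" where
  "periodic_with T f \<longleftrightarrow> (\<forall>t. f (t + T) = f t)"

definition odd_fun :: "(real \<Rightarrow> real) \<Rightarrow> bool" where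
  "odd_fun g \<longleftrightarrow> (\<forall>t. g (- t) = - g t)"

end

theory Submission
  imports Defs
begin

text \<open>With \<open>g = b \<alpha>1 + \<alpha>3\<close> (resp. \<open>g = b \<alpha>1 + \<alpha>3 + a\<^sup>4 \<alpha>4\<close>), on the circle
  \<open>x\<^sup>2 + y\<^sup>2 = r\<^sup>2\<close> in the plane \<open>z = -a\<close> the vector field reduces to the rotation
  \<open>(x, y)' = (b + g t) (y, -x)\<close> and its \<open>z\<close>-component vanishes. Hence \<open>x = r sin \<theta>\<close>,
  \<open>y = r cos \<theta>\<close>, \<open>z = -a\<close> is a solution as soon as \<open>\<theta>' = b + g\<close>. Since \<open>g\<close> is odd and
  \<open>T\<close>-periodic with \<open>T = 2\<pi>/|b|\<close>, its integral over any period vanishes, so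
  \<open>\<theta> (t + T) = \<theta> t \<plusminus> 2\<pi>\<close> and the solution is \<open>T\<close>-periodic.\<close>

lemma oint0_eq_integral_diff:
  assumes g: "continuous_on UNIV g" and "c \<le> 0" "c \<le> t"
  shows "oint0 g t = integral {c..t} g - integral {c..0} g"
proof -
  have int: "g integrable_on {u..v}" for u v
    using g by (meson continuous_on_subset integrable_continuous_real subset_UNIV)
  show ?thesis
  proof (cases "0 \<le> t")
    case True
    then have "integral {c..0} g + integral {0..t} g = integral {c..t} g"
      using Henstock_Kurzweil_Integration.integral_combine[of c 0 t g] assms int by auto
    with True show ?thesis by (simp add: oint0_def)
  next
    case False
    then have "integral {c..t} g + integral {t..0} g = integral {c..0} g"
      using Henstock_Kurzweil_Integration.integral_combine[of c t 0 g] assms int by auto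
    with False show ?thesis by (simp add: oint0_def)
  qed
qed

lemma oint0_has_real_derivative:
  assumes g: "continuous_on UNIV g"
  shows "(oint0 g has_real_derivative g t) (at t)"
proof -
  define c where "c = - \<bar>t\<bar> - 1"
  have c: "c < t" "c \<le> 0" unfolding c_def by auto
  have "((\<lambda>s. integral {c..s} g) has_real_derivative g t) (at t within {c..t + 1})"
    using integral_has_real_derivative[of c "t + 1" g t] g c continuous_on_subset by force
  then have "((\<lambda>s. integral {c..s} g) has_real_derivative g t) (at t)"
    using at_within_Icc_at[of c t "t + 1"] c by simp
  then have "((\<lambda>s. integral {c..s} g - integral {c..0} g) has_real_derivative g t) (at t)"
    by (rule DERIV_diff[OF _ DERIV_const, simplified])
  then show ?thesis
    by (rule has_field_derivative_transform_within_open[of _ _ _ "{c<..}"])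
       (use c oint0_eq_integral_diff[OF g] in auto)
qed

lemma oint0_even:
  assumes g: "continuous_on UNIV g" and "odd_fun g"
  shows "oint0 g (- t) = oint0 g t"
proof -
  have "((\<lambda>s. oint0 g (- s) - oint0 g s) has_real_derivative 0) (at s)" for s
    using DERIV_diff[OF DERIV_chain2[OF oint0_has_real_derivative[OF g] DERIV_minus[OF DERIV_ident]]
        oint0_has_real_derivative[OF g]] \<open>odd_fun g\<close>
    by (simp add: odd_fun_def)
  then have "oint0 g (- t) - oint0 g t = oint0 g (- 0) - oint0 g 0"
    by (intro DERIV_isconst_all) blast
  then show ?thesis by simp
qed

text \<open>The increment \<open>oint0 g (t + T) - oint0 g t\<close> is constant because \<open>g\<close> is
  \<open>T\<close>-periodic, and it vanishes at \<open>t = -T/2\<close> because \<open>oint0 g\<close> is even.\<close>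

lemma oint0_periodic:
  assumes g: "continuous_on UNIV g" and "odd_fun g" and "periodic_with T g"
  shows "periodic_with T (oint0 g)"
  unfolding periodic_with_def
proof
  fix t
  have "((\<lambda>s. oint0 g (s + T) - oint0 g s) has_real_derivative 0) (at s)" for s
    using DERIV_diff[OF DERIV_chain2[OF oint0_has_real_derivative[OF g]
          DERIV_add[OF DERIV_ident DERIV_const[where k = T]]] oint0_has_real_derivative[OF g]]
        \<open>periodic_with T g\<close>
    by (simp add: periodic_with_def)
  then have "oint0 g (t + T) - oint0 g t = oint0 g (- (T / 2) + T) - oint0 g (- (T / 2))"
    by (intro DERIV_isconst_all) blast
  also have "\<dots> = 0"
    using oint0_even[OF assms(1,2), of "T / 2"] by simp
  finally show "oint0 g (t + T) = oint0 g t" by simp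
qed

lemma periodic_with_phase:
  fixes b :: real
  assumes "b \<noteq> 0" and h: "periodic_with (2 * pi / \<bar>b\<bar>) h" and f: "\<And>u. f (u + 2 * pi) = f u"
  shows "periodic_with (2 * pi / \<bar>b\<bar>) (\<lambda>t. f (b * t + h t))"
  unfolding periodic_with_def
proof
  fix t
  have "f (u - 2 * pi) = f u" for u
    using f[of "u - 2 * pi"] by simp
  moreover have "b * (t + 2 * pi / \<bar>b\<bar>) + h (t + 2 * pi / \<bar>b\<bar>)
      = b * t + h t + (if b > 0 then 2 * pi else - 2 * pi)"
    using h \<open>b \<noteq> 0\<close> by (auto simp: periodic_with_def field_simps)
  ultimately show "f (b * (t + 2 * pi / \<bar>b\<bar>) + h (t + 2 * pi / \<bar>b\<bar>)) = f (b * t + h t)"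
    using f by simp
qed

lemma circular_solution_periodic:
  fixes b c r :: real and g :: "real \<Rightarrow> real"
    and Fx Fy Fz :: "real \<Rightarrow> real \<Rightarrow> real \<Rightarrow> real \<Rightarrow> real"
  assumes "b \<noteq> 0" and g: "continuous_on UNIV g" "periodic_with (2 * pi / \<bar>b\<bar>) g" "odd_fun g"
    and Fx: "\<And>t x y. x\<^sup>2 + y\<^sup>2 = r\<^sup>2 \<Longrightarrow> Fx t x y c = y * (b + g t)"
    and Fy: "\<And>t x y. x\<^sup>2 + y\<^sup>2 = r\<^sup>2 \<Longrightarrow> Fy t x y c = - x * (b + g t)"
    and Fz: "\<And>t x y. x\<^sup>2 + y\<^sup>2 = r\<^sup>2 \<Longrightarrow> Fz t x y c = 0"
  shows "let \<theta> = (\<lambda>t. b * t + oint0 g t);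
             x = (\<lambda>t. r * sin (\<theta> t));
             y = (\<lambda>t. r * cos (\<theta> t));
             z = (\<lambda>t. c)
         in (\<forall>t. (x has_real_derivative Fx t (x t) (y t) (z t)) (at t)
                \<and> (y has_real_derivative Fy t (x t) (y t) (z t)) (at t)
                \<and> (z has_real_derivative Fz t (x t) (y t) (z t)) (at t))
            \<and> periodic_with (2 * pi / \<bar>b\<bar>) x
            \<and> periodic_with (2 * pi / \<bar>b\<bar>) y
            \<and> periodic_with (2 * pi / \<bar>b\<bar>) z"
  unfolding Let_def
proof (intro conjI allI)
  fix t
  define \<theta> where "\<theta> = (\<lambda>t. b * t + oint0 g t)"
  have circle: "(r * sin (\<theta> t))\<^sup>2 + (r * cos (\<theta> t))\<^sup>2 = r\<^sup>2"
    by (simp add: power_mult_distrib flip: distrib_left)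
  have \<theta>': "(\<theta> has_real_derivative b + g t) (at t)"
    unfolding \<theta>_def by (intro derivative_intros oint0_has_real_derivative g) simp
  show "((\<lambda>t. r * sin (b * t + oint0 g t)) has_real_derivative
      Fx t (r * sin (b * t + oint0 g t)) (r * cos (b * t + oint0 g t)) c) (at t)"
    using DERIV_cmult[OF DERIV_chain2[OF DERIV_sin \<theta>'], of r] Fx[OF circle]
    by (simp add: \<theta>_def mult.assoc)
  show "((\<lambda>t. r * cos (b * t + oint0 g t)) has_real_derivative
      Fy t (r * sin (b * t + oint0 g t)) (r * cos (b * t + oint0 g t)) c) (at t)"
    using DERIV_cmult[OF DERIV_chain2[OF DERIV_cos \<theta>'], of r] Fy[OF circle]
    by (simp add: \<theta>_def mult.assoc)
  show "((\<lambda>t. c) has_real_derivative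
      Fz t (r * sin (b * t + oint0 g t)) (r * cos (b * t + oint0 g t)) c) (at t)"
    using Fz[OF circle] by (simp add: \<theta>_def)
next
  have "periodic_with (2 * pi / \<bar>b\<bar>) (oint0 g)"
    using oint0_periodic g by blast
  then show "periodic_with (2 * pi / \<bar>b\<bar>) (\<lambda>t. r * sin (b * t + oint0 g t))"
    and "periodic_with (2 * pi / \<bar>b\<bar>) (\<lambda>t. r * cos (b * t + oint0 g t))"
    by (auto intro!: periodic_with_phase[OF \<open>b \<noteq> 0\<close>])
  show "periodic_with (2 * pi / \<bar>b\<bar>) (\<lambda>t. c)"
    by (simp add: periodic_with_def)
qed

theorem proposition1:
  fixes a b e :: real and \<alpha>1 \<alpha>2 \<alpha>3 \<alpha>4 :: "real \<Rightarrow> real"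
  assumes "b \<noteq> 0"
    and "continuous_on UNIV \<alpha>1" and "continuous_on UNIV \<alpha>2"
    and "continuous_on UNIV \<alpha>3" and "continuous_on UNIV \<alpha>4"
  shows
   "(periodic_with (2 * pi / \<bar>b\<bar>) (\<lambda>t. b * \<alpha>1 t + \<alpha>3 t)
       \<and> odd_fun (\<lambda>t. b * \<alpha>1 t + \<alpha>3 t) \<and> a * (a + e) < 0 \<longrightarrow>
     (let \<theta> = (\<lambda>t. b * t + oint0 (\<lambda>s. b * \<alpha>1 s + \<alpha>3 s) t);
          x = (\<lambda>t. sqrt (- a * (a + e)) * sin (\<theta> t));
          y = (\<lambda>t. sqrt (- a * (a + e)) * cos (\<theta> t));
          z = (\<lambda>t. - a)
      in (\<forall>t.
            (x has_real_derivative
               ((a * x t + b * y t + x t * z t) * (1 + \<alpha>1 t) + x t * (a + z t) * \<alpha>2 t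
                + y t * \<alpha>3 t)) (at t)
          \<and> (y has_real_derivative
               ((- b * x t + a * y t + y t * z t) * (1 + \<alpha>1 t) + y t * (a + z t) * \<alpha>2 t
                - x t * \<alpha>3 t)) (at t)
          \<and> (z has_real_derivative
               ((e * z t - (x t)\<^sup>2 - (y t)\<^sup>2 - (z t)\<^sup>2) * (1 + \<alpha>1 t + \<alpha>2 t))) (at t))
         \<and> periodic_with (2 * pi / \<bar>b\<bar>) x
         \<and> periodic_with (2 * pi / \<bar>b\<bar>) y
         \<and> periodic_with (2 * pi / \<bar>b\<bar>) z))
   \<and>
   (periodic_with (2 * pi / \<bar>b\<bar>) (\<lambda>t. b * \<alpha>1 t + \<alpha>3 t + a ^ 4 * \<alpha>4 t)
       \<and> odd_fun (\<lambda>t. b * \<alpha>1 t + \<alpha>3 t + a ^ 4 * \<alpha>4 t) \<longrightarrow>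
     (let \<theta> = (\<lambda>t. b * t + oint0 (\<lambda>s. b * \<alpha>1 s + \<alpha>3 s + a ^ 4 * \<alpha>4 s) t);
          x = (\<lambda>t. a * sin (\<theta> t));
          y = (\<lambda>t. a * cos (\<theta> t));
          z = (\<lambda>t. - a)
      in (\<forall>t.
            (x has_real_derivative
               ((a * x t + b * y t + x t * z t) * (1 + \<alpha>1 t) + x t * (a + z t) * \<alpha>2 t
                + y t * \<alpha>3 t
                - y t * ((x t)\<^sup>2 + (y t)\<^sup>2) * (4 * a * z t + (x t)\<^sup>2 + (y t)\<^sup>2 + 2 * (z t)\<^sup>2)
                  * \<alpha>4 t)) (at t)
          \<and> (y has_real_derivative
               ((- b * x t + a * y t + y t * z t) * (1 + \<alpha>1 t) + y t * (a + z t) * \<alpha>2 t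
                - x t * \<alpha>3 t
                + x t * ((x t)\<^sup>2 + (y t)\<^sup>2) * (4 * a * z t + (x t)\<^sup>2 + (y t)\<^sup>2 + 2 * (z t)\<^sup>2)
                  * \<alpha>4 t)) (at t)
          \<and> (z has_real_derivative
               (- (2 * a * z t + (x t)\<^sup>2 + (y t)\<^sup>2 + (z t)\<^sup>2) * (1 + \<alpha>1 t + \<alpha>2 t))) (at t))
         \<and> periodic_with (2 * pi / \<bar>b\<bar>) x
         \<and> periodic_with (2 * pi / \<bar>b\<bar>) y
         \<and> periodic_with (2 * pi / \<bar>b\<bar>) z))"
proof (intro conjI impI, goal_cases)
  case 1
  then have g: "periodic_with (2 * pi / \<bar>b\<bar>) (\<lambda>t. b * \<alpha>1 t + \<alpha>3 t)"
    "odd_fun (\<lambda>t. b * \<alpha>1 t + \<alpha>3 t)" and r: "(sqrt (- a * (a + e)))\<^sup>2 = - a * (a + e)"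
    by auto
  show ?case
    by (rule circular_solution_periodic[where
          Fx = "\<lambda>t x y z. (a * x + b * y + x * z) * (1 + \<alpha>1 t) + x * (a + z) * \<alpha>2 t + y * \<alpha>3 t" and
          Fy = "\<lambda>t x y z. (- b * x + a * y + y * z) * (1 + \<alpha>1 t) + y * (a + z) * \<alpha>2 t - x * \<alpha>3 t" and
          Fz = "\<lambda>t x y z. (e * z - x\<^sup>2 - y\<^sup>2 - z\<^sup>2) * (1 + \<alpha>1 t + \<alpha>2 t)"])
       (intro continuous_intros assms g | (simp only: r, algebra) | simp add: algebra_simps)+
next
  case 2
  then have g: "periodic_with (2 * pi / \<bar>b\<bar>) (\<lambda>t. b * \<alpha>1 t + \<alpha>3 t + a ^ 4 * \<alpha>4 t)"
    "odd_fun (\<lambda>t. b * \<alpha>1 t + \<alpha>3 t + a ^ 4 * \<alpha>4 t)"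
    by auto
  show ?case
    by (rule circular_solution_periodic[where
          Fx = "\<lambda>t x y z. (a * x + b * y + x * z) * (1 + \<alpha>1 t) + x * (a + z) * \<alpha>2 t + y * \<alpha>3 t
            - y * (x\<^sup>2 + y\<^sup>2) * (4 * a * z + x\<^sup>2 + y\<^sup>2 + 2 * z\<^sup>2) * \<alpha>4 t" and
          Fy = "\<lambda>t x y z. (- b * x + a * y + y * z) * (1 + \<alpha>1 t) + y * (a + z) * \<alpha>2 t - x * \<alpha>3 t
            + x * (x\<^sup>2 + y\<^sup>2) * (4 * a * z + x\<^sup>2 + y\<^sup>2 + 2 * z\<^sup>2) * \<alpha>4 t" and
          Fz = "\<lambda>t x y z. - (2 * a * z + x\<^sup>2 + y\<^sup>2 + z\<^sup>2) * (1 + \<alpha>1 t + \<alpha>2 t)"])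
       (intro continuous_intros assms g | algebra)+
qed

end
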